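(* Let $X$ be a Hermitian $d\times d$ matrix of rank $2$. Then $$\frac{24\,\|X\|_1^2\,\mathrm{tr}\big(P_{\mathrm{Sym}^4}X^{\otimes4}\big)}{\big(\|X\|_2^2+\mathrm{tr}(X)^2\big)^3}\le\frac5{81}\big(95+32\sqrt{10}\big)\approx12.1107 .$$ If in addition $\mathrm{tr}(X)=0$, the left-hand side equals $12$.
   Context: $P_{\mathrm{Sym}^4}$ is the orthogonal projector onto the totally symmetric subspace of $(\mathbb{C}^d)^{\otimes 4}$. $\|\cdot\|_1$, $\|\cdot\|_2$ are the trace norm and Hilbert–Schmidt norm. *)

theory Defs
  imports "Jordan_Normal_Form.Schur_Decomposition" "Jordan_Normal_Form.DL_Rank"
          "Jordan_Normal_Form.Char_Poly" "HOL-Computational_Algebra.Polynomial"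
          "HOL-Combinatorics.Permutations"
begin

text \<open>Index conventions: a basis vector of (C^d)^{tensor 4} with multi-index
  (i_0,i_1,i_2,i_3), i_k < d, is identified with the flat index
  ((i_0 d + i_1) d + i_2) d + i_3 < d^4.  digit d k i is the k-th tensor slot.\<close>

definition digit :: "nat \<Rightarrow> nat \<Rightarrow> nat \<Rightarrow> nat" where
  "digit d k i = (i div d ^ (3 - k)) mod d"

definition tensor4 :: "nat \<Rightarrow> complex mat \<Rightarrow> complex mat" where
  "tensor4 d X = mat (d^4) (d^4)
     (\<lambda>(i, j). \<Prod>k<4. X $$ (digit d k i, digit d k j))"

text \<open>Permutation operator of the tensor factors: e_{i_0..i_3} to e_{i_{pi 0}..i_{pi 3}}.\<close>
definition perm_op :: "nat \<Rightarrow> (nat \<Rightarrow> nat) \<Rightarrow> complex mat" where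
  "perm_op d \<pi> = mat (d^4) (d^4)
     (\<lambda>(i, j). if (\<forall>k<4. digit d k i = digit d (\<pi> k) j) then 1 else 0)"

definition P_Sym4 :: "nat \<Rightarrow> complex mat" where
  "P_Sym4 d = mat (d^4) (d^4) (\<lambda>(i, j).
     (1 / 24) * (\<Sum>\<pi> \<in> {\<pi>. \<pi> permutes {..<4::nat}}. perm_op d \<pi> $$ (i, j)))"

text \<open>Trace norm: sum of singular values (square roots of the eigenvalues of X^H X,
  counted with algebraic multiplicity as roots of the characteristic polynomial).\<close>
definition trace_norm :: "complex mat \<Rightarrow> real" where
  "trace_norm X = sum_mset (image_mset (\<lambda>\<mu>. sqrt (Re \<mu>))
      (proots (char_poly (mat_adjoint X * X))))"

definition hs_norm :: "complex mat \<Rightarrow> real" where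
  "hs_norm X = sqrt (\<Sum>i<dim_row X. \<Sum>j<dim_col X. (cmod (X $$ (i, j)))^2)"

definition mtrace :: "complex mat \<Rightarrow> complex" where
  "mtrace A = (\<Sum>i<dim_row A. A $$ (i, i))"

definition hermitian_mat :: "complex mat \<Rightarrow> bool" where
  "hermitian_mat X \<longleftrightarrow> mat_adjoint X = X"

end

theory Submission
  imports Defs
    "Jordan_Normal_Form.Jordan_Normal_Form_Uniqueness"
    "Jordan_Normal_Form.Jordan_Normal_Form_Existence"
begin

(* Writing P_Sym4 as the average of the 24 permutation operators, the trace of P_pi X^{tensor 4}
   is the product of tr X^l over the cycles of pi, so
     tr (P_Sym4 X^{tensor 4}) = (p1^4 + 6 p1^2 p2 + 3 p2^2 + 8 p1 p3 + 6 p4) / 24,  pk = tr X^k.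
   A Hermitian matrix of rank 2 has exactly two nonzero eigenvalues a, b (with multiplicity), both
   real, so pk = a^k + b^k and the trace becomes h4(a, b) = a^4 + a^3 b + a^2 b^2 + a b^3 + b^4,
   while the trace norm is |a| + |b| and the squared Hilbert-Schmidt norm is a^2 + b^2.
   With m = a^2 + ab + b^2 the quotient is at most 3 if ab >= 0; if ab < 0 it equals
   3 (m^3 + 4 m^2 q + 2 m q^2 - 3 q^3) / m^3 with q = -ab > 0, a cubic in q/m whose maximum is
   the stated constant.  For b = -a it is 12. *)

section \<open>Traces against the fourfold tensor power\<close>

definition tensor_index :: "nat \<Rightarrow> nat \<Rightarrow> nat \<Rightarrow> nat \<Rightarrow> nat \<Rightarrow> nat" where
  "tensor_index d a b c e = ((a * d + b) * d + c) * d + e"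

lemma sum_lessThan_mult:
  fixes g :: "nat \<Rightarrow> 'a::comm_monoid_add"
  shows "(\<Sum>i<m * d. g i) = (\<Sum>q<m. \<Sum>r<d. g (q * d + r))"
proof -
  have "(\<Sum>i<m * d. g i) = (\<Sum>q<m. sum g {q * d..<q * d + d})"
    by (rule sum.nat_group[symmetric])
  also have "\<dots> = (\<Sum>q<m. \<Sum>r<d. g (q * d + r))"
  proof (rule sum.cong[OF refl])
    fix q
    have "sum g {q * d..<q * d + d} = sum g {0 + q * d..<d + q * d}"
      by (simp add: add.commute)
    also have "\<dots> = (\<Sum>r<d. g (q * d + r))"
      by (simp only: sum.shift_bounds_nat_ivl atLeast0LessThan add.commute)
    finally show "sum g {q * d..<q * d + d} = (\<Sum>r<d. g (q * d + r))" .
  qed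
  finally show ?thesis .
qed

lemma sum_lessThan_power4:
  fixes g :: "nat \<Rightarrow> 'a::comm_monoid_add"
  shows "(\<Sum>i<d^4. g i) = (\<Sum>a<d. \<Sum>b<d. \<Sum>c<d. \<Sum>e<d. g (tensor_index d a b c e))"
proof -
  have "(\<Sum>i<d^4. g i) = (\<Sum>i<1 * d * d * d * d. g i)"
    by (simp add: power4_eq_xxxx)
  also have "\<dots> = (\<Sum>q<1. \<Sum>a<d. \<Sum>b<d. \<Sum>c<d. \<Sum>e<d.
      g ((((q * d + a) * d + b) * d + c) * d + e))"
    by (simp only: sum_lessThan_mult)
  finally show ?thesis by (simp add: tensor_index_def)
qed

lemma tensor_index_less:
  assumes "a < d" "b < d" "c < d" "e < d"
  shows "tensor_index d a b c e < d^4"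
proof -
  have step: "x * d + y < m * d" if "x < m" "y < d" for x y m :: nat
  proof -
    have "x * d + y < (x + 1) * d" using that(2) by simp
    also have "\<dots> \<le> m * d" using that(1) by (intro mult_right_mono) auto
    finally show ?thesis .
  qed
  show ?thesis
    using step[OF step[OF step[OF assms(1,2)] assms(3)] assms(4)]
    by (simp add: tensor_index_def power4_eq_xxxx)
qed

lemma digit_tensor_index:
  assumes "a < d" "b < d" "c < d" "e < d" "k < 4"
  shows "digit d k (tensor_index d a b c e) = [a, b, c, e] ! k"
proof -
  have div1: "tensor_index d a b c e div d = (a * d + b) * d + c"
    using assms by (simp add: tensor_index_def)
  have div2: "tensor_index d a b c e div d^2 = a * d + b"
    using assms by (simp add: div1 power2_eq_square div_mult2_eq)
  have div3: "tensor_index d a b c e div d^3 = a"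
  proof -
    have "d^3 = d^2 * d" by (simp add: power2_eq_square power3_eq_cube)
    then show ?thesis using assms by (simp add: div2 div_mult2_eq)
  qed
  have "k = 0 \<or> k = 1 \<or> k = 2 \<or> k = 3" using assms(5) by auto
  then show ?thesis
    using assms(1-4) div1 div2 div3 by (auto simp: digit_def tensor_index_def)
qed

lemma sum_digits_eq:
  fixes f :: "nat \<Rightarrow> 'a::comm_monoid_add"
  assumes w: "\<And>k. k < 4 \<Longrightarrow> w k < d"
  shows "(\<Sum>i<d^4. if \<forall>k<4. digit d k i = w k then f i else 0)
       = f (tensor_index d (w 0) (w 1) (w 2) (w 3))"
proof -
  have digits: "(\<forall>k<4. digit d k (tensor_index d a b c e) = w k)
      \<longleftrightarrow> e = w 3 \<and> c = w 2 \<and> b = w 1 \<and> a = w 0"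
    if "a < d" "b < d" "c < d" "e < d" for a b c e
    using digit_tensor_index[OF that]
    by (auto simp: numeral_eq_Suc less_Suc_eq)
  have "(\<Sum>i<d^4. if \<forall>k<4. digit d k i = w k then f i else 0)
      = (\<Sum>a<d. \<Sum>b<d. \<Sum>c<d. \<Sum>e<d.
           if e = w 3 then if c = w 2 then if b = w 1 then if a = w 0
           then f (tensor_index d a b c e) else 0 else 0 else 0 else 0)"
    unfolding sum_lessThan_power4 by (intro sum.cong refl) (simp add: digits)
  also have "\<dots> = f (tensor_index d (w 0) (w 1) (w 2) (w 3))"
    using w by (simp add: sum.delta)
  finally show ?thesis .
qed

lemma sum_reverse3:
  "(\<Sum>i\<in>A. \<Sum>j\<in>B. \<Sum>k\<in>C. g i j k) = (\<Sum>k\<in>C. \<Sum>j\<in>B. \<Sum>i\<in>A. g i j k)"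
proof -
  have "(\<Sum>i\<in>A. \<Sum>j\<in>B. \<Sum>k\<in>C. g i j k) = (\<Sum>i\<in>A. \<Sum>k\<in>C. \<Sum>j\<in>B. g i j k)"
    by (rule sum.cong[OF refl], rule sum.swap)
  also have "\<dots> = (\<Sum>k\<in>C. \<Sum>i\<in>A. \<Sum>j\<in>B. g i j k)" by (rule sum.swap)
  also have "\<dots> = (\<Sum>k\<in>C. \<Sum>j\<in>B. \<Sum>i\<in>A. g i j k)"
    by (rule sum.cong[OF refl], rule sum.swap)
  finally show ?thesis .
qed

lemma tensor4_perm_op_diag:
  assumes p: "\<pi> permutes {..<4::nat}" and j: "j < d^4"
  shows "(\<Sum>i<d^4. perm_op d \<pi> $$ (i, j) * tensor4 d X $$ (j, i))
       = (\<Prod>k<4. X $$ (digit d k j, digit d (\<pi> k) j))"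
proof -
  define w where "w k = digit d (\<pi> k) j" for k
  have "0 < d" using j by (cases d) auto
  then have w: "w k < d" for k unfolding w_def by (simp add: digit_def)
  have "(\<Sum>i<d^4. perm_op d \<pi> $$ (i, j) * tensor4 d X $$ (j, i))
      = (\<Sum>i<d^4. if \<forall>k<4. digit d k i = w k then tensor4 d X $$ (j, i) else 0)"
    using j by (intro sum.cong refl) (auto simp: perm_op_def w_def)
  also have "\<dots> = tensor4 d X $$ (j, tensor_index d (w 0) (w 1) (w 2) (w 3))"
    using w by (rule sum_digits_eq)
  also have "\<dots> = (\<Prod>k<4. X $$ (digit d k j, w k))"
    using j w
    by (auto simp: tensor4_def tensor_index_less digit_tensor_index intro!: prod.cong)
       (auto simp: numeral_eq_Suc less_Suc_eq)
  finally show ?thesis unfolding w_def .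
qed

(* perm_trace X d i0 i1 i2 i3 is the trace of X^{tensor 4} times the permutation operator of
   k |-> i_k, written over the four tensor indices. *)
definition perm_trace :: "complex mat \<Rightarrow> nat \<Rightarrow> nat \<Rightarrow> nat \<Rightarrow> nat \<Rightarrow> nat \<Rightarrow> complex" where
  "perm_trace X d i0 i1 i2 i3 = (\<Sum>a<d. \<Sum>b<d. \<Sum>c<d. \<Sum>e<d.
     X $$ (a, [a,b,c,e] ! i0) * X $$ (b, [a,b,c,e] ! i1) *
     X $$ (c, [a,b,c,e] ! i2) * X $$ (e, [a,b,c,e] ! i3))"

lemma mtrace_P_Sym4_tensor4_perm_sum:
  "mtrace (P_Sym4 d * tensor4 d X)
     = (\<Sum>\<pi> | \<pi> permutes {..<4::nat}. perm_trace X d (\<pi> 0) (\<pi> 1) (\<pi> 2) (\<pi> 3)) / 24"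
proof -
  let ?S = "{\<pi>. \<pi> permutes {..<4::nat}}"
  let ?T = "tensor4 d X"
  have "mtrace (P_Sym4 d * ?T) = (\<Sum>i<d^4. \<Sum>j<d^4. P_Sym4 d $$ (i, j) * ?T $$ (j, i))"
    unfolding mtrace_def
    by (rule sum.cong) (simp_all add: P_Sym4_def tensor4_def scalar_prod_def atLeast0LessThan)
  also have "\<dots> = (\<Sum>i<d^4. \<Sum>j<d^4. \<Sum>\<pi>\<in>?S. perm_op d \<pi> $$ (i, j) * ?T $$ (j, i) / 24)"
    by (intro sum.cong refl)
       (simp add: P_Sym4_def perm_op_def sum_divide_distrib sum_distrib_right)
  also have "\<dots> = (\<Sum>\<pi>\<in>?S. \<Sum>j<d^4. \<Sum>i<d^4. perm_op d \<pi> $$ (i, j) * ?T $$ (j, i) / 24)"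
    by (rule sum_reverse3)
  also have "\<dots> = (\<Sum>\<pi>\<in>?S. \<Sum>j<d^4. \<Sum>i<d^4. perm_op d \<pi> $$ (i, j) * ?T $$ (j, i)) / 24"
    by (simp add: sum_divide_distrib)
  also have "\<dots> = (\<Sum>\<pi>\<in>?S. \<Sum>j<d^4. \<Prod>k<4. X $$ (digit d k j, digit d (\<pi> k) j)) / 24"
    by (simp add: tensor4_perm_op_diag)
  also have "\<dots> = (\<Sum>\<pi>\<in>?S. perm_trace X d (\<pi> 0) (\<pi> 1) (\<pi> 2) (\<pi> 3)) / 24"
  proof -
    have "(\<Sum>j<d^4. \<Prod>k<4. X $$ (digit d k j, digit d (\<pi> k) j))
        = perm_trace X d (\<pi> 0) (\<pi> 1) (\<pi> 2) (\<pi> 3)" if "\<pi> permutes {..<4}" for \<pi>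
    proof -
      have "\<pi> k < 4" if "k < 4" for k
        using permutes_in_image[OF \<open>\<pi> permutes {..<4}\<close>] that by simp
      then show ?thesis
        unfolding sum_lessThan_power4 perm_trace_def
        by (intro sum.cong refl)
           (simp add: digit_tensor_index numeral_eq_Suc mult_ac)
    qed
    then show ?thesis by simp
  qed
  finally show ?thesis by simp
qed

section \<open>Permutation traces as products of power traces\<close>

definition cyclic_sum1 :: "complex mat \<Rightarrow> nat \<Rightarrow> complex" where
  "cyclic_sum1 X d = (\<Sum>a<d. X $$ (a, a))"

definition cyclic_sum2 :: "complex mat \<Rightarrow> nat \<Rightarrow> complex" where
  "cyclic_sum2 X d = (\<Sum>a<d. \<Sum>b<d. X $$ (a, b) * X $$ (b, a))"

definition cyclic_sum3 :: "complex mat \<Rightarrow> nat \<Rightarrow> complex" where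
  "cyclic_sum3 X d = (\<Sum>a<d. \<Sum>b<d. \<Sum>c<d. X $$ (a, b) * X $$ (b, c) * X $$ (c, a))"

definition cyclic_sum4 :: "complex mat \<Rightarrow> nat \<Rightarrow> complex" where
  "cyclic_sum4 X d = (\<Sum>a<d. \<Sum>b<d. \<Sum>c<d. \<Sum>e<d.
     X $$ (a, b) * X $$ (b, c) * X $$ (c, e) * X $$ (e, a))"

lemmas cyclic_sum_defs = cyclic_sum1_def cyclic_sum2_def cyclic_sum3_def cyclic_sum4_def

lemma nth_list4:
  "[a, b, c, e] ! 0 = a" "[a, b, c, e] ! 1 = b" "[a, b, c, e] ! 2 = c" "[a, b, c, e] ! 3 = e"
  by (simp_all add: numeral_eq_Suc)

lemma sum4_swap12:
  "(\<Sum>a\<in>A. \<Sum>b\<in>A. \<Sum>c\<in>A. \<Sum>e\<in>A. f a b c e) = (\<Sum>b\<in>A. \<Sum>a\<in>A. \<Sum>c\<in>A. \<Sum>e\<in>A. f a b c e)"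
  by (rule sum.swap)

lemma sum4_swap23:
  "(\<Sum>a\<in>A. \<Sum>b\<in>A. \<Sum>c\<in>A. \<Sum>e\<in>A. f a b c e) = (\<Sum>a\<in>A. \<Sum>c\<in>A. \<Sum>b\<in>A. \<Sum>e\<in>A. f a b c e)"
  by (rule sum.cong[OF refl], rule sum.swap)

lemma sum4_swap34:
  "(\<Sum>a\<in>A. \<Sum>b\<in>A. \<Sum>c\<in>A. \<Sum>e\<in>A. f a b c e) = (\<Sum>a\<in>A. \<Sum>b\<in>A. \<Sum>e\<in>A. \<Sum>c\<in>A. f a b c e)"
  by (rule sum.cong[OF refl], rule sum.cong[OF refl], rule sum.swap)

lemma cyclic_sum2_squared:
  "cyclic_sum2 X d * cyclic_sum2 X d
     = (\<Sum>a<d. \<Sum>b<d. \<Sum>c<d. \<Sum>e<d. X $$ (a, b) * X $$ (b, a) * (X $$ (c, e) * X $$ (e, c)))"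
  unfolding cyclic_sum2_def by (simp only: sum_distrib_right) (simp only: sum_distrib_left)

(* Each permutation trace factors into cyclic sums along the cycles of the permutation;
   the proofs only reorder the four summations. *)
lemma perm_trace_0123:
  "perm_trace X d 0 1 2 3 = cyclic_sum1 X d * cyclic_sum1 X d * cyclic_sum1 X d * cyclic_sum1 X d"
  unfolding perm_trace_def nth_list4
  by (simp add: cyclic_sum_defs sum_distrib_left sum_distrib_right mult_ac)

lemma perm_trace_0132:
  "perm_trace X d 0 1 3 2 = cyclic_sum2 X d * cyclic_sum1 X d * cyclic_sum1 X d"
  unfolding perm_trace_def nth_list4
  by (subst sum4_swap23, subst sum4_swap12, subst sum4_swap34, subst sum4_swap23)
     (simp add: cyclic_sum_defs sum_distrib_left sum_distrib_right mult_ac)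

lemma perm_trace_0213:
  "perm_trace X d 0 2 1 3 = cyclic_sum2 X d * cyclic_sum1 X d * cyclic_sum1 X d"
  unfolding perm_trace_def nth_list4
  by (subst sum4_swap12, subst sum4_swap23)
     (simp add: cyclic_sum_defs sum_distrib_left sum_distrib_right mult_ac)

lemma perm_trace_0231:
  "perm_trace X d 0 2 3 1 = cyclic_sum3 X d * cyclic_sum1 X d"
  unfolding perm_trace_def nth_list4
  by (subst sum4_swap12, subst sum4_swap23, subst sum4_swap34)
     (simp add: cyclic_sum_defs sum_distrib_left sum_distrib_right mult_ac)

lemma perm_trace_0312:
  "perm_trace X d 0 3 1 2 = cyclic_sum3 X d * cyclic_sum1 X d"
  unfolding perm_trace_def nth_list4
  by (subst sum4_swap12, subst sum4_swap23, subst sum4_swap12, subst sum4_swap34)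
     (simp add: cyclic_sum_defs sum_distrib_left sum_distrib_right mult_ac)

lemma perm_trace_0321:
  "perm_trace X d 0 3 2 1 = cyclic_sum2 X d * cyclic_sum1 X d * cyclic_sum1 X d"
  unfolding perm_trace_def nth_list4
  by (subst sum4_swap12, subst sum4_swap34, subst sum4_swap23)
     (simp add: cyclic_sum_defs sum_distrib_left sum_distrib_right mult_ac)

lemma perm_trace_1023:
  "perm_trace X d 1 0 2 3 = cyclic_sum2 X d * cyclic_sum1 X d * cyclic_sum1 X d"
  unfolding perm_trace_def nth_list4
  by (simp add: cyclic_sum_defs sum_distrib_left sum_distrib_right mult_ac)

lemma perm_trace_1032:
  "perm_trace X d 1 0 3 2 = cyclic_sum2 X d * cyclic_sum2 X d"
  unfolding perm_trace_def nth_list4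
  by (simp only: cyclic_sum2_squared) (simp add: mult_ac)

lemma perm_trace_1203:
  "perm_trace X d 1 2 0 3 = cyclic_sum3 X d * cyclic_sum1 X d"
  unfolding perm_trace_def nth_list4
  by (simp add: cyclic_sum_defs sum_distrib_left sum_distrib_right mult_ac)

lemma perm_trace_1230:
  "perm_trace X d 1 2 3 0 = cyclic_sum4 X d"
  unfolding perm_trace_def nth_list4
  by (simp add: cyclic_sum_defs sum_distrib_left sum_distrib_right mult_ac)

lemma perm_trace_1302:
  "perm_trace X d 1 3 0 2 = cyclic_sum4 X d"
  unfolding perm_trace_def nth_list4
  by (subst sum4_swap34)
     (simp add: cyclic_sum_defs sum_distrib_left sum_distrib_right mult_ac)

lemma perm_trace_1320:
  "perm_trace X d 1 3 2 0 = cyclic_sum3 X d * cyclic_sum1 X d"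
  unfolding perm_trace_def nth_list4
  by (subst sum4_swap34)
     (simp add: cyclic_sum_defs sum_distrib_left sum_distrib_right mult_ac)

lemma perm_trace_2013:
  "perm_trace X d 2 0 1 3 = cyclic_sum3 X d * cyclic_sum1 X d"
  unfolding perm_trace_def nth_list4
  by (subst sum4_swap12)
     (simp add: cyclic_sum_defs sum_distrib_left sum_distrib_right mult_ac)

lemma perm_trace_2031:
  "perm_trace X d 2 0 3 1 = cyclic_sum4 X d"
  unfolding perm_trace_def nth_list4
  by (subst sum4_swap12)
     (simp add: cyclic_sum_defs sum_distrib_left sum_distrib_right mult_ac)

lemma perm_trace_2103:
  "perm_trace X d 2 1 0 3 = cyclic_sum2 X d * cyclic_sum1 X d * cyclic_sum1 X d"
  unfolding perm_trace_def nth_list4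
  by (subst sum4_swap23)
     (simp add: cyclic_sum_defs sum_distrib_left sum_distrib_right mult_ac)

lemma perm_trace_2130:
  "perm_trace X d 2 1 3 0 = cyclic_sum3 X d * cyclic_sum1 X d"
  unfolding perm_trace_def nth_list4
  by (subst sum4_swap23, subst sum4_swap34)
     (simp add: cyclic_sum_defs sum_distrib_left sum_distrib_right mult_ac)

lemma perm_trace_2301:
  "perm_trace X d 2 3 0 1 = cyclic_sum2 X d * cyclic_sum2 X d"
  unfolding perm_trace_def nth_list4
  by (subst sum4_swap23, simp only: cyclic_sum2_squared)
     (simp add: mult_ac)

lemma perm_trace_2310:
  "perm_trace X d 2 3 1 0 = cyclic_sum4 X d"
  unfolding perm_trace_def nth_list4
  by (subst sum4_swap23)
     (simp add: cyclic_sum_defs sum_distrib_left sum_distrib_right mult_ac)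

lemma perm_trace_3012:
  "perm_trace X d 3 0 1 2 = cyclic_sum4 X d"
  unfolding perm_trace_def nth_list4
  by (subst sum4_swap12, subst sum4_swap34)
     (simp add: cyclic_sum_defs sum_distrib_left sum_distrib_right mult_ac)

lemma perm_trace_3021:
  "perm_trace X d 3 0 2 1 = cyclic_sum3 X d * cyclic_sum1 X d"
  unfolding perm_trace_def nth_list4
  by (subst sum4_swap12, subst sum4_swap34)
     (simp add: cyclic_sum_defs sum_distrib_left sum_distrib_right mult_ac)

lemma perm_trace_3102:
  "perm_trace X d 3 1 0 2 = cyclic_sum3 X d * cyclic_sum1 X d"
  unfolding perm_trace_def nth_list4
  by (subst sum4_swap23, subst sum4_swap12, subst sum4_swap34)
     (simp add: cyclic_sum_defs sum_distrib_left sum_distrib_right mult_ac)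

lemma perm_trace_3120:
  "perm_trace X d 3 1 2 0 = cyclic_sum2 X d * cyclic_sum1 X d * cyclic_sum1 X d"
  unfolding perm_trace_def nth_list4
  by (subst sum4_swap34, subst sum4_swap23)
     (simp add: cyclic_sum_defs sum_distrib_left sum_distrib_right mult_ac)

lemma perm_trace_3201:
  "perm_trace X d 3 2 0 1 = cyclic_sum4 X d"
  unfolding perm_trace_def nth_list4
  by (subst sum4_swap12, subst sum4_swap23)
     (simp add: cyclic_sum_defs sum_distrib_left sum_distrib_right mult_ac)

lemma perm_trace_3210:
  "perm_trace X d 3 2 1 0 = cyclic_sum2 X d * cyclic_sum2 X d"
  unfolding perm_trace_def nth_list4
  by (subst sum4_swap12, subst sum4_swap23, simp only: cyclic_sum2_squared)
     (simp add: mult_ac)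

lemma sum_permutes_4:
  fixes g :: "nat \<Rightarrow> nat \<Rightarrow> nat \<Rightarrow> nat \<Rightarrow> 'a::comm_monoid_add"
  shows "(\<Sum>\<pi> | \<pi> permutes {..<4::nat}. g (\<pi> 0) (\<pi> 1) (\<pi> 2) (\<pi> 3)) =
    g 0 1 2 3 + g 0 1 3 2 + (g 0 2 1 3 + g 0 2 3 1 + (g 0 3 2 1 + g 0 3 1 2)) +
    (g 1 0 2 3 + g 1 0 3 2 + (g 1 2 0 3 + g 1 2 3 0 + (g 1 3 2 0 + g 1 3 0 2)) +
     (g 2 1 0 3 + g 2 1 3 0 + (g 2 0 1 3 + g 2 0 3 1 + (g 2 3 0 1 + g 2 3 1 0)) +
      (g 3 1 2 0 + g 3 1 0 2 + (g 3 2 1 0 + g 3 2 0 1 + (g 3 0 2 1 + g 3 0 1 2)))))"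
proof -
  have "{..<4::nat} = {0, 1, 2, 3}" by auto
  then show ?thesis by (simp add: sum_over_permutations_insert)
qed

lemma sum_perm_trace:
  "(\<Sum>\<pi> | \<pi> permutes {..<4::nat}. perm_trace X d (\<pi> 0) (\<pi> 1) (\<pi> 2) (\<pi> 3))
     = cyclic_sum1 X d ^ 4 + 6 * cyclic_sum1 X d ^ 2 * cyclic_sum2 X d + 3 * cyclic_sum2 X d ^ 2
       + 8 * cyclic_sum1 X d * cyclic_sum3 X d + 6 * cyclic_sum4 X d"
  unfolding sum_permutes_4[of "perm_trace X d"]
  by (simp only: perm_trace_0123 perm_trace_0132 perm_trace_0213 perm_trace_0231 perm_trace_0312
      perm_trace_0321 perm_trace_1023 perm_trace_1032 perm_trace_1203 perm_trace_1230
      perm_trace_1302 perm_trace_1320 perm_trace_2013 perm_trace_2031 perm_trace_2103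
      perm_trace_2130 perm_trace_2301 perm_trace_2310 perm_trace_3012 perm_trace_3021
      perm_trace_3102 perm_trace_3120 perm_trace_3201 perm_trace_3210)
     (simp add: algebra_simps power2_eq_square power4_eq_xxxx)

lemma mtrace_mult:
  assumes "A \<in> carrier_mat d d" "B \<in> carrier_mat d d"
  shows "mtrace (A * B) = (\<Sum>i<d. \<Sum>j<d. A $$ (i, j) * B $$ (j, i))"
  using assms by (simp add: mtrace_def scalar_prod_def atLeast0LessThan)

lemma mult_mat_index_square:
  assumes "A \<in> carrier_mat d d" "B \<in> carrier_mat d d" "i < d" "j < d"
  shows "(A * B) $$ (i, j) = (\<Sum>k<d. A $$ (i, k) * B $$ (k, j))"
  using assms by (simp add: scalar_prod_def atLeast0LessThan)

lemma cyclic_sums_eq_mtrace_power: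
  assumes X: "X \<in> carrier_mat d d"
  shows "cyclic_sum1 X d = mtrace X"
    and "cyclic_sum2 X d = mtrace (X ^\<^sub>m 2)"
    and "cyclic_sum3 X d = mtrace (X ^\<^sub>m 3)"
    and "cyclic_sum4 X d = mtrace (X ^\<^sub>m 4)"
proof -
  have XX: "X * X \<in> carrier_mat d d" using X by simp
  have pow: "X ^\<^sub>m 2 = X * X" "X ^\<^sub>m 3 = (X * X) * X" "X ^\<^sub>m 4 = (X * X) * (X * X)"
    using X by (simp_all add: numeral_eq_Suc assoc_mult_mat[of _ d d _ d _ d])
  have sq: "(X * X) $$ (i, j) = (\<Sum>k<d. X $$ (i, k) * X $$ (k, j))" if "i < d" "j < d" for i j
    using mult_mat_index_square[OF X X that] .
  show "cyclic_sum1 X d = mtrace X"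
    using X by (simp add: cyclic_sum1_def mtrace_def)
  show "cyclic_sum2 X d = mtrace (X ^\<^sub>m 2)"
    unfolding pow mtrace_mult[OF X X] cyclic_sum2_def ..
  have "mtrace (X ^\<^sub>m 3) = (\<Sum>a<d. \<Sum>c<d. \<Sum>b<d. X $$ (a, b) * X $$ (b, c) * X $$ (c, a))"
    unfolding pow mtrace_mult[OF XX X] by (simp add: sq sum_distrib_right)
  also have "\<dots> = cyclic_sum3 X d"
    unfolding cyclic_sum3_def by (rule sum.cong[OF refl], rule sum.swap)
  finally show "cyclic_sum3 X d = mtrace (X ^\<^sub>m 3)" ..
  have "mtrace (X ^\<^sub>m 4)
      = (\<Sum>a<d. \<Sum>c<d. \<Sum>e<d. \<Sum>b<d. X $$ (a, b) * X $$ (b, c) * X $$ (c, e) * X $$ (e, a))"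
    unfolding pow mtrace_mult[OF XX XX]
    by (simp add: sq sum_distrib_left sum_distrib_right mult.assoc)
  also have "\<dots> = cyclic_sum4 X d"
    unfolding cyclic_sum4_def by (subst sum4_swap34, subst sum4_swap23, rule refl)
  finally show "cyclic_sum4 X d = mtrace (X ^\<^sub>m 4)" ..
qed

theorem mtrace_P_Sym4_tensor4:
  assumes "X \<in> carrier_mat d d"
  shows "mtrace (P_Sym4 d * tensor4 d X)
    = (mtrace X ^ 4 + 6 * mtrace X ^ 2 * mtrace (X ^\<^sub>m 2) + 3 * mtrace (X ^\<^sub>m 2) ^ 2
       + 8 * mtrace X * mtrace (X ^\<^sub>m 3) + 6 * mtrace (X ^\<^sub>m 4)) / 24"
  unfolding mtrace_P_Sym4_tensor4_perm_sum sum_perm_trace cyclic_sums_eq_mtrace_power[OF assms] ..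

section \<open>Spectral facts for Hermitian matrices\<close>

lemma (in vec_space) span_cols_eq_range:
  assumes X: "X \<in> carrier_mat n n"
  shows "span (set (cols X)) = {X *\<^sub>v v | v. v \<in> carrier_vec n}"
proof -
  have cols: "set (cols X) \<subseteq> carrier_vec n" using X by (auto simp: cols_def)
  have dims: "\<forall>w\<in>set (cols X). dim_vec w = n" using cols by auto
  have lincomb: "lincomb_list c (cols X) = X *\<^sub>v vec n c" for c
    using lincomb_list_as_mat_mult[OF dims] mat_of_cols_cols[of X] X by simp
  have "\<exists>c. X *\<^sub>v v = X *\<^sub>v vec n c" if "v \<in> carrier_vec n" for v
  proof -
    have "vec n (\<lambda>i. v $ i) = v" using that by auto
    then show ?thesis by metis
  qed
  then show ?thesis
    unfolding span_list_as_span[OF cols, symmetric] span_list_def lincomb by auto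
qed

lemma rank_plus_kernel_dim:
  fixes X :: "'a::field mat"
  assumes X: "X \<in> carrier_mat n n"
  shows "vec_space.rank n X + kernel_dim X = n"
proof -
  interpret VS: vec_space "TYPE('a)" n .
  define T where "T = (\<lambda>v. X *\<^sub>v v)"
  interpret LM: linear_map class_ring VS.V VS.V T
    by unfold_locales
       (use X in \<open>auto simp: LinearCombinations.module_hom_def T_def
          mult_add_distrib_mat_vec mult_mat_vec\<close>)
  have "LM.imT = VS.span (set (cols X))"
    unfolding VS.span_cols_eq_range[OF X] LM.im_def unfolding T_def by auto
  moreover have "LM.kerT = mat_kernel X"
    unfolding LM.ker_def unfolding T_def mat_kernel_def using X by auto
  moreover have "kernel_dim X = vectorspace.dim class_ring (VS.vs (mat_kernel X))"
  proof -
    interpret K: kernel n n X by (unfold_locales, rule X)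
    show ?thesis using X by (simp add: kernel_dim_def)
  qed
  ultimately show ?thesis
    using LM.rank_nullity_main(1)[OF VS.fin_dim] VS.dim_is_n X
    by (simp add: VS.rank_def)
qed

lemma hermitian_mat_index:
  assumes X: "X \<in> carrier_mat d d" and H: "hermitian_mat X" and "i < d" "j < d"
  shows "X $$ (i, j) = cnj (X $$ (j, i))"
proof -
  have "mat_adjoint X $$ (i, j) = cnj (X $$ (j, i))"
    using assms unfolding mat_adjoint_def by (simp add: mat_of_rows_def)
  then show ?thesis using H unfolding hermitian_mat_def by simp
qed

lemma mult_mat_vec_index_sum:
  assumes "X \<in> carrier_mat d d" "w \<in> carrier_vec d" "j < d"
  shows "(X *\<^sub>v w) $ j = (\<Sum>i<d. X $$ (j, i) * w $ i)"
  using assms by (simp add: mult_mat_vec_def scalar_prod_def atLeast0LessThan)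

lemma hermitian_mat_inner_swap:
  assumes X: "X \<in> carrier_mat d d" and H: "hermitian_mat X"
    and u: "u \<in> carrier_vec d" and w: "w \<in> carrier_vec d"
  shows "(\<Sum>j<d. cnj (u $ j) * (X *\<^sub>v w) $ j) = (\<Sum>i<d. cnj ((X *\<^sub>v u) $ i) * w $ i)"
proof -
  have "(\<Sum>j<d. cnj (u $ j) * (X *\<^sub>v w) $ j) = (\<Sum>j<d. \<Sum>i<d. cnj (u $ j) * X $$ (j, i) * w $ i)"
    by (intro sum.cong refl)
       (simp add: mult_mat_vec_index_sum[OF X w] sum_distrib_left mult.assoc)
  also have "\<dots> = (\<Sum>i<d. \<Sum>j<d. cnj (u $ j) * X $$ (j, i) * w $ i)"
    by (rule sum.swap)
  also have "\<dots> = (\<Sum>i<d. cnj ((X *\<^sub>v u) $ i) * w $ i)"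
  proof (intro sum.cong refl)
    fix i assume i: "i \<in> {..<d}"
    have "cnj ((X *\<^sub>v u) $ i) = (\<Sum>j<d. cnj (X $$ (i, j)) * cnj (u $ j))"
      using i by (simp add: mult_mat_vec_index_sum[OF X u])
    also have "\<dots> = (\<Sum>j<d. X $$ (j, i) * cnj (u $ j))"
      using i hermitian_mat_index[OF X H]
      by (intro sum.cong refl) (metis complex_cnj_cnj lessThan_iff)
    finally have cnj_Xu: "cnj ((X *\<^sub>v u) $ i) = (\<Sum>j<d. X $$ (j, i) * cnj (u $ j))" .
    show "(\<Sum>j<d. cnj (u $ j) * X $$ (j, i) * w $ i) = cnj ((X *\<^sub>v u) $ i) * w $ i"
      unfolding cnj_Xu sum_distrib_right by (simp add: mult_ac)
  qed
  finally show ?thesis .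
qed

lemma sum_cnj_mult_self_eq_0:
  fixes w :: "complex vec"
  assumes "(\<Sum>i<d. cnj (w $ i) * w $ i) = 0" "i < d"
  shows "w $ i = 0"
proof -
  have "(\<Sum>i<d. cnj (w $ i) * w $ i) = (\<Sum>i<d. complex_of_real ((cmod (w $ i))^2))"
    by (intro sum.cong refl) (metis complex_norm_square mult.commute of_real_power)
  also have "\<dots> = complex_of_real (\<Sum>i<d. (cmod (w $ i))^2)" by simp
  finally have "(\<Sum>i<d. cnj (w $ i) * w $ i) = complex_of_real (\<Sum>i<d. (cmod (w $ i))^2)" .
  with assms(1) have "complex_of_real (\<Sum>i<d. (cmod (w $ i))^2) = 0" by simp
  then have "(\<Sum>i<d. (cmod (w $ i))^2) = 0" by (simp only: of_real_eq_0_iff)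
  then have "\<forall>i\<in>{..<d}. (cmod (w $ i))^2 = 0"
    by (subst sum_nonneg_eq_0_iff[symmetric]) auto
  then show ?thesis using assms(2) by simp
qed

lemma hermitian_mat_kernel_square:
  assumes X: "X \<in> carrier_mat d d" and H: "hermitian_mat X" and v: "v \<in> carrier_vec d"
    and "X *\<^sub>v (X *\<^sub>v v) = 0\<^sub>v d"
  shows "X *\<^sub>v v = 0\<^sub>v d"
proof -
  have Xv: "X *\<^sub>v v \<in> carrier_vec d" using X v by simp
  have "(\<Sum>i<d. cnj ((X *\<^sub>v v) $ i) * (X *\<^sub>v v) $ i)
      = (\<Sum>j<d. cnj (v $ j) * (X *\<^sub>v (X *\<^sub>v v)) $ j)"
    by (rule hermitian_mat_inner_swap[OF X H v Xv, symmetric])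
  also have "\<dots> = 0" using assms(4) by simp
  finally have "(\<Sum>i<d. cnj ((X *\<^sub>v v) $ i) * (X *\<^sub>v v) $ i) = 0" .
  from sum_cnj_mult_self_eq_0[OF this] show ?thesis
    using X Xv by (intro eq_vecI) auto
qed

lemma hermitian_mat_kernel_power:
  assumes X: "X \<in> carrier_mat d d" and H: "hermitian_mat X" and k: "k \<ge> 1"
  shows "mat_kernel (X ^\<^sub>m k) = mat_kernel X"
proof -
  have "X ^\<^sub>m k *\<^sub>v v = 0\<^sub>v d \<longleftrightarrow> X *\<^sub>v v = 0\<^sub>v d" if v: "v \<in> carrier_vec d" for v
    using k v
  proof (induction k arbitrary: v rule: dec_induct)
    case (step k)
    have Xv: "X *\<^sub>v v \<in> carrier_vec d" using X step.prems by simp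
    have "X ^\<^sub>m Suc k *\<^sub>v v = X ^\<^sub>m k *\<^sub>v (X *\<^sub>v v)"
      using X step.prems by (simp add: assoc_mult_mat_vec[of _ d d _ d])
    also have "\<dots> = 0\<^sub>v d \<longleftrightarrow> X *\<^sub>v (X *\<^sub>v v) = 0\<^sub>v d" by (rule step.IH[OF Xv])
    also have "\<dots> \<longleftrightarrow> X *\<^sub>v v = 0\<^sub>v d"
      using hermitian_mat_kernel_square[OF X H step.prems] X by auto
    finally show ?case .
  qed (use X in simp)
  then show ?thesis using X by (auto simp: mat_kernel_def)
qed

lemma hermitian_mat_eigenvalue_real:
  assumes X: "X \<in> carrier_mat d d" and H: "hermitian_mat X" and e: "eigenvalue X e"
  shows "cnj e = e"
proof -
  from e obtain v where v: "v \<in> carrier_vec d" "v \<noteq> 0\<^sub>v d" "X *\<^sub>v v = e \<cdot>\<^sub>v v"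
    unfolding eigenvalue_def eigenvector_def using X by auto
  define N where "N = (\<Sum>i<d. cnj (v $ i) * v $ i)"
  have "(\<Sum>j<d. cnj (v $ j) * (X *\<^sub>v v) $ j) = (\<Sum>i<d. cnj ((X *\<^sub>v v) $ i) * v $ i)"
    by (rule hermitian_mat_inner_swap[OF X H v(1) v(1)])
  then have "e * N = cnj e * N"
    using v unfolding N_def by (simp add: sum_distrib_left mult_ac)
  moreover have "N \<noteq> 0"
  proof
    assume "N = 0"
    from sum_cnj_mult_self_eq_0[OF this[unfolded N_def]] have "v = 0\<^sub>v d"
      using v(1) by (intro eq_vecI) auto
    then show False using v(2) by simp
  qed
  ultimately show ?thesis by simp
qed

definition jordan_eigenvalues :: "(nat \<times> complex) list \<Rightarrow> complex list" where
  "jordan_eigenvalues n_as = concat (map (\<lambda>(n, a). replicate n a) n_as)"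

lemma prod_jordan_eigenvalues:
  "(\<Prod>(n, a)\<leftarrow>n_as. [:- a, 1:] ^ n) = (\<Prod>e\<leftarrow>jordan_eigenvalues n_as. [:- e, 1:])"
  unfolding jordan_eigenvalues_def by (induction n_as) (auto simp: prod_list_replicate)

lemma count_zero_jordan_eigenvalues:
  "length (filter (\<lambda>e. e = 0) (jordan_eigenvalues n_as))
     = sum_list (map fst [(n, e)\<leftarrow>n_as. e = 0])"
  unfolding jordan_eigenvalues_def by (induction n_as) auto

lemma block_size_le_length_jordan_eigenvalues:
  "(n, a) \<in> set n_as \<Longrightarrow> n \<le> length (jordan_eigenvalues n_as)"
  unfolding jordan_eigenvalues_def by (induction n_as) auto

(* The kernel of a Hermitian matrix is its whole generalized 0-eigenspace, so 0 occurs on the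
   diagonal exactly d - r times. *)
lemma hermitian_mat_triangularization:
  assumes X: "X \<in> carrier_mat d d" and H: "hermitian_mat X" and r: "vec_space.rank d X = r"
  obtains B P Q where "similar_mat_wit X B P Q" "upper_triangular B"
    "\<forall>e\<in>set (diag_mat B). cnj e = e" "length (filter (\<lambda>e. e \<noteq> 0) (diag_mat B)) = r"
proof -
  obtain as where "char_poly X = (\<Prod>a\<leftarrow>as. [:- a, 1:])"
    using char_poly_factorized[OF X] by blast
  then obtain n_as where jnf: "jordan_nf X n_as" using jordan_nf_exists[OF X] by blast
  define es where "es = jordan_eigenvalues n_as"
  have cp: "char_poly X = (\<Prod>e\<leftarrow>es. [:- e, 1:])"
    unfolding es_def prod_jordan_eigenvalues[symmetric] by (rule jordan_nf_char_poly[OF jnf])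
  have len: "length es = d"
    using degree_monic_char_poly[OF X] degree_linear_factors[of uminus es] cp by simp
  have "length (filter (\<lambda>e. e = 0) es) = dim_gen_eigenspace X 0 (Suc d)"
    unfolding dim_gen_eigenspace[OF jnf] es_def count_zero_jordan_eigenvalues
    using block_size_le_length_jordan_eigenvalues len
    by (intro arg_cong[where f = sum_list] map_cong refl) (force simp: es_def)
  also have "\<dots> = kernel_dim X"
  proof -
    have "char_matrix X 0 = X" unfolding char_matrix_def using X by (intro eq_matI) auto
    then show ?thesis
      unfolding dim_gen_eigenspace_def kernel_dim_def
      using hermitian_mat_kernel_power[OF X H, of "Suc d"] X by simp
  qed
  also have "\<dots> = d - r" using rank_plus_kernel_dim[OF X] r by simp
  finally have "length (filter (\<lambda>e. e \<noteq> 0) es) = r"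
    using sum_length_filter_compl[of "\<lambda>e. e = 0" es] len rank_plus_kernel_dim[OF X] r by simp
  moreover have "cnj e = e" if "e \<in> set es" for e
  proof -
    have "poly (char_poly X) e = 0" unfolding cp using that
      by (induction es) (auto simp: poly_prod_list)
    then show ?thesis
      using eigenvalue_root_char_poly[OF X] hermitian_mat_eigenvalue_real[OF X H] by simp
  qed
  moreover obtain B P Q where "schur_decomposition X es = (B, P, Q)"
    by (cases "schur_decomposition X es") auto
  note schur_decomposition[OF X cp this]
  ultimately show ?thesis using that by auto
qed

lemma upper_triangular_mult:
  assumes A: "A \<in> carrier_mat n n" and B: "B \<in> carrier_mat n n"
    and uA: "upper_triangular A" and uB: "upper_triangular B"
  shows "upper_triangular (A * B)"
    and "i < n \<Longrightarrow> (A * B) $$ (i, i) = A $$ (i, i) * B $$ (i, i)"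
proof -
  have vanish: "A $$ (i, k) * B $$ (k, j) = 0" if "i < n" "k < n" "k < i \<or> j < k" for i j k
    using that A B uA uB by (auto dest: upper_triangularD)
  show "upper_triangular (A * B)"
  proof (rule upper_triangularI)
    fix i j assume ji: "j < i" and "i < dim_row (A * B)"
    then have i: "i < n" using A by simp
    have "(A * B) $$ (i, j) = (\<Sum>k<n. A $$ (i, k) * B $$ (k, j))"
      using i ji by (intro mult_mat_index_square[OF A B]) auto
    also have "\<dots> = 0" using i ji by (intro sum.neutral ballI vanish) auto
    finally show "(A * B) $$ (i, j) = 0" .
  qed
  assume i: "i < n"
  have "(A * B) $$ (i, i) = (\<Sum>k<n. A $$ (i, k) * B $$ (k, i))"
    by (rule mult_mat_index_square[OF A B i i])
  also have "\<dots> = A $$ (i, i) * B $$ (i, i) + (\<Sum>k\<in>{..<n} - {i}. A $$ (i, k) * B $$ (k, i))"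
    using i by (simp add: sum.remove)
  also have "(\<Sum>k\<in>{..<n} - {i}. A $$ (i, k) * B $$ (k, i)) = 0"
    using i vanish by (intro sum.neutral) (auto simp: neq_iff)
  finally show "(A * B) $$ (i, i) = A $$ (i, i) * B $$ (i, i)" by simp
qed

lemma upper_triangular_power:
  assumes B: "B \<in> carrier_mat n n" and uB: "upper_triangular B"
  shows "upper_triangular (B ^\<^sub>m k) \<and> (\<forall>i<n. (B ^\<^sub>m k) $$ (i, i) = B $$ (i, i) ^ k)"
proof (induction k)
  case 0
  then show ?case using B by (auto simp: upper_triangular_def)
next
  case (Suc k)
  have "B ^\<^sub>m k \<in> carrier_mat n n" using B by simp
  from upper_triangular_mult[OF this B _ uB] Suc show ?case
    by (simp del: power_Suc add: power_Suc2)
qed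

lemma mtrace_mult_commute:
  assumes A: "A \<in> carrier_mat n m" and B: "B \<in> carrier_mat m n"
  shows "mtrace (A * B) = mtrace (B * A)"
proof -
  have "mtrace (A * B) = (\<Sum>i<n. \<Sum>j<m. A $$ (i, j) * B $$ (j, i))"
    using A B by (simp add: mtrace_def scalar_prod_def atLeast0LessThan)
  also have "\<dots> = (\<Sum>j<m. \<Sum>i<n. B $$ (j, i) * A $$ (i, j))"
    by (subst sum.swap) (simp add: mult.commute)
  also have "\<dots> = mtrace (B * A)"
    using A B by (simp add: mtrace_def scalar_prod_def atLeast0LessThan)
  finally show ?thesis .
qed

lemma mtrace_similar_mat_wit:
  assumes w: "similar_mat_wit A B P Q" and A: "A \<in> carrier_mat n n"
  shows "mtrace A = mtrace B"
proof -
  from similar_mat_witD2[OF A w] have B: "B \<in> carrier_mat n n" and P: "P \<in> carrier_mat n n"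
    and Q: "Q \<in> carrier_mat n n" and QP: "Q * P = 1\<^sub>m n" and A_eq: "A = P * B * Q" by auto
  have "mtrace A = mtrace (P * (B * Q))" using A_eq P B Q by (simp add: assoc_mult_mat)
  also have "\<dots> = mtrace ((B * Q) * P)" using P B Q by (intro mtrace_mult_commute) auto
  also have "\<dots> = mtrace (B * (Q * P))" using P B Q by (simp add: assoc_mult_mat)
  also have "\<dots> = mtrace B" using QP B by simp
  finally show ?thesis .
qed

lemma mtrace_power_triangularization:
  assumes X: "X \<in> carrier_mat n n" and w: "similar_mat_wit X B P Q" and uB: "upper_triangular B"
  shows "mtrace (X ^\<^sub>m k) = sum_list (map (\<lambda>e. e ^ k) (diag_mat B))"
proof -
  have B: "B \<in> carrier_mat n n" using similar_mat_witD2[OF X w] by auto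
  have "mtrace (X ^\<^sub>m k) = mtrace (B ^\<^sub>m k)"
    by (rule mtrace_similar_mat_wit[OF similar_mat_wit_pow[OF w] pow_carrier_mat[OF X]])
  also have "\<dots> = (\<Sum>i<n. B $$ (i, i) ^ k)"
    unfolding mtrace_def using upper_triangular_power[OF B uB, of k] B by (intro sum.cong) auto
  also have "\<dots> = sum_list (map (\<lambda>e. e ^ k) (diag_mat B))"
    unfolding diag_mat_def using B
    by (simp add: interv_sum_list_conv_sum_set_nat lessThan_atLeast0 comp_def)
  finally show ?thesis .
qed

lemma proots_prod_linear_factors: "proots (\<Prod>a\<leftarrow>as. [:- a, 1:]) = mset (as :: complex list)"
proof (induction as)
  case (Cons a as)
  have "(\<Prod>a\<leftarrow>as. [:- a, 1:]) \<noteq> (0 :: complex poly)" by (auto simp: prod_list_zero_iff)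
  then have "proots ([:- a, 1:] * (\<Prod>a\<leftarrow>as. [:- a, 1:]))
      = proots [:- a, 1:] + proots (\<Prod>a\<leftarrow>as. [:- a, 1:])"
    by (intro proots_mult) auto
  then show ?case using Cons.IH by simp
qed simp

lemma trace_norm_hermitian_triangularization:
  assumes X: "X \<in> carrier_mat n n" and H: "hermitian_mat X"
    and w: "similar_mat_wit X B P Q" and uB: "upper_triangular B"
    and real: "\<forall>e\<in>set (diag_mat B). cnj e = e"
  shows "trace_norm X = sum_list (map (\<lambda>e. \<bar>Re e\<bar>) (diag_mat B))"
proof -
  have B: "B \<in> carrier_mat n n" using similar_mat_witD2[OF X w] by auto
  have "mat_adjoint X * X = X ^\<^sub>m 2"
    using H X unfolding hermitian_mat_def by (simp add: numeral_2_eq_2)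
  moreover have "similar_mat (X ^\<^sub>m 2) (B ^\<^sub>m 2)"
    using similar_mat_wit_pow[OF w] unfolding similar_mat_def by blast
  ultimately have "char_poly (mat_adjoint X * X) = char_poly (B ^\<^sub>m 2)"
    by (simp add: char_poly_similar)
  also have "\<dots> = (\<Prod>a\<leftarrow>diag_mat (B ^\<^sub>m 2). [:- a, 1:])"
    using upper_triangular_power[OF B uB, of 2] B by (intro char_poly_upper_triangular) auto
  also have "diag_mat (B ^\<^sub>m 2) = map (\<lambda>e. e^2) (diag_mat B)"
    using upper_triangular_power[OF B uB, of 2] B unfolding diag_mat_def by simp
  finally have char_poly_adj:
    "char_poly (mat_adjoint X * X) = (\<Prod>a\<leftarrow>map (\<lambda>e. e^2) (diag_mat B). [:- a, 1:])" .
  have "trace_norm X = sum_list (map (\<lambda>\<mu>. sqrt (Re \<mu>)) (map (\<lambda>e. e^2) (diag_mat B)))"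
    unfolding trace_norm_def char_poly_adj proots_prod_linear_factors
    by (simp only: mset_map[symmetric] sum_mset_sum_list)
  also have "\<dots> = sum_list (map (\<lambda>e. sqrt (Re (e^2))) (diag_mat B))"
    by (simp add: comp_def)
  also have "\<dots> = sum_list (map (\<lambda>e. \<bar>Re e\<bar>) (diag_mat B))"
  proof (intro arg_cong[where f = sum_list] map_cong refl)
    fix e assume "e \<in> set (diag_mat B)"
    then have "e = complex_of_real (Re e)" using real by (simp add: complex_eq_iff)
    then show "sqrt (Re (e^2)) = \<bar>Re e\<bar>" by (metis Re_complex_of_real of_real_power real_sqrt_abs)
  qed
  finally show ?thesis .
qed

lemma hs_norm_hermitian:
  assumes X: "X \<in> carrier_mat d d" and H: "hermitian_mat X"
  shows "(hs_norm X)^2 = Re (mtrace (X ^\<^sub>m 2))"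
proof -
  have "cyclic_sum2 X d = (\<Sum>i<d. \<Sum>j<d. complex_of_real ((cmod (X $$ (i, j)))^2))"
    unfolding cyclic_sum2_def
  proof (intro sum.cong refl)
    fix i j assume "i \<in> {..<d}" "j \<in> {..<d}"
    then have "X $$ (j, i) = cnj (X $$ (i, j))" by (intro hermitian_mat_index[OF X H]) auto
    then show "X $$ (i, j) * X $$ (j, i) = complex_of_real ((cmod (X $$ (i, j)))^2)"
      by (simp only: complex_norm_square)
  qed
  then have "Re (mtrace (X ^\<^sub>m 2)) = (\<Sum>i<d. \<Sum>j<d. (cmod (X $$ (i, j)))^2)"
    by (simp add: cyclic_sums_eq_mtrace_power(2)[OF X, symmetric] Re_sum)
  moreover have "(\<Sum>i<d. \<Sum>j<d. (cmod (X $$ (i, j)))^2) \<ge> 0" by (intro sum_nonneg) auto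
  ultimately show ?thesis unfolding hs_norm_def using X by simp
qed

lemma hermitian_mat_rank2_eigenvalues:
  assumes X: "X \<in> carrier_mat d d" and H: "hermitian_mat X" and r: "vec_space.rank d X = 2"
  obtains \<alpha> \<beta> :: real where "\<alpha> \<noteq> 0" "\<beta> \<noteq> 0" "trace_norm X = \<bar>\<alpha>\<bar> + \<bar>\<beta>\<bar>"
    "\<And>k. k \<ge> 1 \<Longrightarrow> mtrace (X ^\<^sub>m k) = complex_of_real \<alpha> ^ k + complex_of_real \<beta> ^ k"
proof -
  obtain B P Q where w: "similar_mat_wit X B P Q" and ut: "upper_triangular B"
    and real: "\<forall>e\<in>set (diag_mat B). cnj e = e"
    and two: "length (filter (\<lambda>e. e \<noteq> 0) (diag_mat B)) = 2"
    using hermitian_mat_triangularization[OF X H r] by blast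
  then obtain a b where ab: "filter (\<lambda>e. e \<noteq> 0) (diag_mat B) = [a, b]"
    by (auto simp: length_Suc_conv numeral_2_eq_2)
  have "{e \<in> set (diag_mat B). e \<noteq> 0} = {a, b}" using arg_cong[OF ab, of set] by simp
  then have ab_in: "a \<in> set (diag_mat B)" "b \<in> set (diag_mat B)" and "a \<noteq> 0" "b \<noteq> 0"
    by blast+
  have sum_diag: "sum_list (map f (diag_mat B)) = f a + f b" if "f 0 = 0"
    for f :: "complex \<Rightarrow> 'b::monoid_add"
  proof -
    have "sum_list (map f (diag_mat B)) = sum_list (map f (filter (\<lambda>e. e \<noteq> 0) (diag_mat B)))"
      by (rule sum_list_map_filter[symmetric]) (use that in auto)
    then show ?thesis unfolding ab by simp
  qed
  have a: "a = complex_of_real (Re a)" and b: "b = complex_of_real (Re b)"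
    using real ab_in by (simp_all add: complex_eq_iff)
  show ?thesis
  proof
    show "Re a \<noteq> 0" "Re b \<noteq> 0" using \<open>a \<noteq> 0\<close> \<open>b \<noteq> 0\<close> a b by (metis of_real_0)+
    show "trace_norm X = \<bar>Re a\<bar> + \<bar>Re b\<bar>"
      unfolding trace_norm_hermitian_triangularization[OF X H w ut real] by (rule sum_diag) simp
    show "mtrace (X ^\<^sub>m k) = complex_of_real (Re a) ^ k + complex_of_real (Re b) ^ k" if "k \<ge> 1" for k
    proof -
      have "sum_list (map (\<lambda>e. e ^ k) (diag_mat B)) = a ^ k + b ^ k"
        using that by (intro sum_diag) simp
      then show ?thesis unfolding mtrace_power_triangularization[OF X w ut] by (simp flip: a b)
    qed
  qed
qed

section \<open>The bound in terms of two eigenvalues\<close>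

lemma h4_power_sums:
  fixes a b :: "'a::field_char_0"
  shows "((a + b)^4 + 6 * (a + b)^2 * (a^2 + b^2) + 3 * (a^2 + b^2)^2 + 8 * (a + b) * (a^3 + b^3)
      + 6 * (a^4 + b^4)) / 24 = a^4 + a^3*b + a^2*b^2 + a*b^3 + b^4"
proof -
  have "(a + b)^4 + 6 * (a + b)^2 * (a^2 + b^2) + 3 * (a^2 + b^2)^2 + 8 * (a + b) * (a^3 + b^3)
      + 6 * (a^4 + b^4) = 24 * (a^4 + a^3*b + a^2*b^2 + a*b^3 + b^4)"
    by (simp add: algebra_simps power2_eq_square power3_eq_cube power4_eq_xxxx)
  then show ?thesis by simp
qed

lemma abs_add_abs_squared:
  fixes a b :: real
  shows "(\<bar>a\<bar> + \<bar>b\<bar>)^2 = a^2 + b^2 + 2 * \<bar>a * b\<bar>"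
  by (simp add: power2_eq_square abs_mult algebra_simps)

lemma h4_two_variables:
  fixes a b :: real
  shows "a^4 + a^3*b + a^2*b^2 + a*b^3 + b^4
    = (a^2 + a*b + b^2)^2 - (a^2 + a*b + b^2) * (a*b) - (a*b)^2"
  by (simp add: power2_eq_square power3_eq_cube power4_eq_xxxx algebra_simps)

lemma h4_bound_nonneg_product:
  fixes a b :: real
  assumes "a * b \<ge> 0"
  shows "24 * (\<bar>a\<bar> + \<bar>b\<bar>)^2 * (a^4 + a^3*b + a^2*b^2 + a*b^3 + b^4)
    \<le> 3 * (2 * (a^2 + a*b + b^2))^3"
proof -
  define m where "m = a^2 + a*b + b^2"
  define p where "p = a * b"
  have "m \<ge> 0" using assms unfolding m_def by simp
  have sq: "(\<bar>a\<bar> + \<bar>b\<bar>)^2 = m + p"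
    using assms unfolding abs_add_abs_squared m_def p_def by simp
  have "24 * (\<bar>a\<bar> + \<bar>b\<bar>)^2 * (a^4 + a^3*b + a^2*b^2 + a*b^3 + b^4)
      = 24 * (m^3 - (2*m*p^2 + p^3))"
    unfolding sq h4_two_variables[of a b, folded m_def p_def]
    by (simp add: power2_eq_square power3_eq_cube algebra_simps)
  also have "\<dots> \<le> 24 * m^3"
  proof -
    have "0 \<le> 2*m*p^2 + p^3"
      using \<open>m \<ge> 0\<close> assms unfolding p_def by (intro add_nonneg_nonneg mult_nonneg_nonneg) auto
    then show ?thesis by simp
  qed
  also have "\<dots> = 3 * (2 * m)^3" by simp
  finally show ?thesis unfolding m_def .
qed

(* The constant is chosen so that the cubic below has a double root, at q/m = (2 + 2 sqrt 10)/9. *)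
lemma h4_bound_identity:
  fixes m q s :: real
  assumes "s^2 = 10"
  shows "45 * (95 + 32*s) * m^3 - 2187 * (m^3 + 4*m^2*q + 2*m*q^2 - 3*q^3)
       = 9 * (9*q - (2 + 2*s) * m)^2 * (9*q - (2 - 4*s) * m)"
proof -
  have "9 * (9*q - (2 + 2*s) * m)^2 * (9*q - (2 - 4*s) * m)
      - (45 * (95 + 32*s) * m^3 - 2187 * (m^3 + 4*m^2*q + 2*m*q^2 - 3*q^3))
     = (s^2 - 10) * ((216 + 144*s) * m^3 - 972 * m^2 * q)"
    by (simp add: algebra_simps power2_eq_square power3_eq_cube)
  then show ?thesis using assms by simp
qed

lemma h4_bound_neg_product:
  fixes a b :: real
  assumes "a * b < 0"
  shows "24 * (\<bar>a\<bar> + \<bar>b\<bar>)^2 * (a^4 + a^3*b + a^2*b^2 + a*b^3 + b^4)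
    \<le> 5/81 * (95 + 32 * sqrt 10) * (2 * (a^2 + a*b + b^2))^3"
proof -
  define m where "m = a^2 + a*b + b^2"
  define q where "q = - (a * b)"
  define P where "P = m^3 + 4*m^2*q + 2*m*q^2 - 3*q^3"
  have q: "q > 0" using assms unfolding q_def by linarith
  have m: "m > 0"
  proof -
    have "m = (a + b)^2 + q" unfolding m_def q_def by (simp add: power2_eq_square algebra_simps)
    with q show ?thesis by (metis add_nonneg_pos zero_le_power2)
  qed
  have sq: "(\<bar>a\<bar> + \<bar>b\<bar>)^2 = m + 3 * q"
    using assms unfolding abs_add_abs_squared m_def q_def by simp
  have ab: "a * b = - q" unfolding q_def by simp
  have lhs: "24 * (\<bar>a\<bar> + \<bar>b\<bar>)^2 * (a^4 + a^3*b + a^2*b^2 + a*b^3 + b^4) = 24 * P"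
    unfolding sq h4_two_variables[of a b, folded m_def] ab P_def
    by (simp add: power2_eq_square power3_eq_cube algebra_simps)
  have "sqrt 10 \<ge> (1::real)" by simp
  then have "2 - 4 * sqrt 10 \<le> (0::real)" by linarith
  then have "(2 - 4 * sqrt 10) * m \<le> 0"
    using m by (simp add: mult_nonpos_nonneg)
  then have "9*q - (2 - 4 * sqrt 10) * m \<ge> 0" using q by linarith
  moreover have "(sqrt 10)^2 = (10::real)" by simp
  ultimately have "45 * (95 + 32 * sqrt 10) * m^3 - 2187 * P \<ge> 0"
    unfolding P_def by (simp only: h4_bound_identity) simp
  then have "2187 * P \<le> 45 * ((95 + 32 * sqrt 10) * m^3)" by (simp only: mult.assoc)
  moreover have "5/81 * (95 + 32 * sqrt 10) * (2 * m)^3 = 40/81 * ((95 + 32 * sqrt 10) * m^3)"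
    by (simp add: power_mult_distrib)
  ultimately show ?thesis unfolding lhs m_def[symmetric] by linarith
qed

(* No hypothesis is needed: for a = b = 0 the quotient is 0 / 0 = 0. *)
lemma h4_ratio_bound:
  fixes a b :: real
  shows "24 * (\<bar>a\<bar> + \<bar>b\<bar>)^2 * (a^4 + a^3*b + a^2*b^2 + a*b^3 + b^4) / ((a^2 + b^2) + (a + b)^2)^3
    \<le> 5/81 * (95 + 32 * sqrt 10)"
proof -
  define K :: real where "K = 5/81 * (95 + 32 * sqrt 10)"
  define N where "N = 24 * (\<bar>a\<bar> + \<bar>b\<bar>)^2 * (a^4 + a^3*b + a^2*b^2 + a*b^3 + b^4)"
  define D where "D = (a^2 + b^2) + (a + b)^2"
  have "K \<ge> 3" unfolding K_def by simp
  have D: "D = 2 * (a^2 + a*b + b^2)"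
    unfolding D_def by (simp add: power2_eq_square algebra_simps)
  have "N \<le> K * D^3"
  proof (cases "a * b \<ge> 0")
    case True
    have "0 \<le> D^3" unfolding D_def by simp
    with \<open>K \<ge> 3\<close> have "3 * D^3 \<le> K * D^3" by (rule mult_right_mono)
    with h4_bound_nonneg_product[OF True] show ?thesis unfolding N_def D by linarith
  next
    case False
    then show ?thesis using h4_bound_neg_product[of a b] unfolding N_def D K_def by simp
  qed
  moreover have "D \<ge> 0" unfolding D_def by simp
  ultimately have "N / D^3 \<le> K"
    using \<open>K \<ge> 3\<close> by (cases "D = 0") (simp_all add: pos_divide_le_eq)
  then show ?thesis unfolding N_def D_def K_def .
qed

lemma h4_ratio_traceless:
  fixes a :: real
  assumes "a \<noteq> 0"
  shows "24 * (\<bar>a\<bar> + \<bar>-a\<bar>)^2 * (a^4 + a^3*(-a) + a^2*(-a)^2 + a*(-a)^3 + (-a)^4)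
    / ((a^2 + (-a)^2) + (a + -a)^2)^3 = 12"
  using assms by (simp add: power2_eq_square power3_eq_cube power4_eq_xxxx field_simps)

theorem mainTheorem10:
  fixes d :: nat and X :: "complex mat"
  assumes "X \<in> carrier_mat d d"
    and "hermitian_mat X"
    and "vec_space.rank d X = 2"
  shows "24 * (trace_norm X)^2 * Re (mtrace (P_Sym4 d * tensor4 d X))
            / ((hs_norm X)^2 + (Re (mtrace X))^2) ^ 3
          \<le> 5 / 81 * (95 + 32 * sqrt 10)
       \<and> (mtrace X = 0 \<longrightarrow>
         24 * (trace_norm X)^2 * Re (mtrace (P_Sym4 d * tensor4 d X))
            / ((hs_norm X)^2 + (Re (mtrace X))^2) ^ 3 = 12)"
proof -
  obtain \<alpha> \<beta> :: real where "\<alpha> \<noteq> 0" and TN: "trace_norm X = \<bar>\<alpha>\<bar> + \<bar>\<beta>\<bar>"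
    and tr: "\<And>k. k \<ge> 1 \<Longrightarrow> mtrace (X ^\<^sub>m k) = complex_of_real \<alpha> ^ k + complex_of_real \<beta> ^ k"
    using hermitian_mat_rank2_eigenvalues[OF assms] by metis
  have tr1: "mtrace X = complex_of_real (\<alpha> + \<beta>)" using tr[of 1] assms(1) by simp
  have tr234: "mtrace (X ^\<^sub>m 2) = complex_of_real \<alpha> ^ 2 + complex_of_real \<beta> ^ 2"
    "mtrace (X ^\<^sub>m 3) = complex_of_real \<alpha> ^ 3 + complex_of_real \<beta> ^ 3"
    "mtrace (X ^\<^sub>m 4) = complex_of_real \<alpha> ^ 4 + complex_of_real \<beta> ^ 4"
    by (simp_all add: tr)
  have "mtrace (P_Sym4 d * tensor4 d X)
      = complex_of_real (\<alpha>^4 + \<alpha>^3*\<beta> + \<alpha>^2*\<beta>^2 + \<alpha>*\<beta>^3 + \<beta>^4)"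
    unfolding mtrace_P_Sym4_tensor4[OF assms(1)] tr1 of_real_add tr234 h4_power_sums by simp
  then have PS: "Re (mtrace (P_Sym4 d * tensor4 d X)) = \<alpha>^4 + \<alpha>^3*\<beta> + \<alpha>^2*\<beta>^2 + \<alpha>*\<beta>^3 + \<beta>^4"
    by simp
  have HS: "(hs_norm X)^2 = \<alpha>^2 + \<beta>^2"
    using hs_norm_hermitian[OF assms(1,2)] tr234(1) by simp
  have RT: "Re (mtrace X) = \<alpha> + \<beta>" using tr1 by simp
  have "\<beta> = - \<alpha>" if "mtrace X = 0"
  proof -
    have "complex_of_real (\<alpha> + \<beta>) = 0" using that tr1 by argo
    then have "\<alpha> + \<beta> = 0" by (simp only: of_real_eq_0_iff)
    then show ?thesis by linarith
  qed
  then show ?thesis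
    unfolding TN PS HS RT using h4_ratio_bound h4_ratio_traceless[OF \<open>\<alpha> \<noteq> 0\<close>] by auto
qed

end
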